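(* Let $A$ be a Lie conformal algebra and $M$ an $A$-module with a commutative associative product such that $\partial^M$ and all $a_\lambda$ are derivations of it. For every $\xi\in\tilde\Gamma_h(A,M)$ we have $[\partial,\iota_\xi]=\partial\circ\iota_\xi-\iota_\xi\circ\partial=\iota_{\partial\xi}$ as operators on $\tilde\Gamma^\bullet(A,M)$. In particular, if $\xi\in\Gamma_h$ then $\iota_\xi$ commutes with $\partial$ and induces a well-defined contraction operator $\iota_\xi:\Gamma^k\to\Gamma^{k-h}$.
   Context: $\mathbb F$ field of characteristic 0. $\tilde\Gamma^k(A,M)$: $\mathbb F$-linear $\tilde\gamma:A^{\otimes k}\to\mathbb F[\lambda_1..\lambda_k]\otimes M$ with $\tilde\gamma(\dots,\partial a_i,\dots)=-\lambda_i\tilde\gamma$ and skew-symmetry under simultaneous permutations of $a_i,\lambda_i$; $\partial$ acts by $(\partial\tilde\gamma)_{\lambda_1..\lambda_k}=(\partial^M+\lambda_1+\dots+\lambda_k)\tilde\gamma_{\lambda_1..\lambda_k}$; $\Gamma^k=\tilde\Gamma^k/\partial\tilde\Gamma^k$. $\tilde\Gamma_h(A,M)$: quotient of $A^{\otimes h}\otimes\mathrm{Hom}_{\mathbb F}(\mathbb F[\lambda_1..\lambda_h],M)$ by (C1) $\cdots\partial a_i\cdots\otimes\phi=-\cdots\otimes\lambda_i^*\phi$, $(\lambda_i^*\phi)(f)=\phi(\lambda_if)$, and (C2) skew-symmetry $a_{\sigma(1)}\otimes..\otimes a_{\sigma(h)}\otimes\sigma^*\phi=\mathrm{sign}(\sigma)a_1\otimes..\otimes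 a_h\otimes\phi$, $(\sigma^*\phi)(f)=\phi(f(\lambda_{\sigma(1)},..,\lambda_{\sigma(h)}))$. $\partial$ acts on $\tilde\Gamma_h$ by $\partial(a_1\otimes\cdots\otimes a_h\otimes\phi)=a_1\otimes\cdots\otimes a_h\otimes(-\lambda_1^*-\dots-\lambda_h^*+\partial)\phi$ where $(\partial\phi)(f)=\partial^M(\phi(f))$; $\Gamma_h=\{\xi\in\tilde\Gamma_h:\partial\xi=0\}$. Contraction: for $\xi$ represented by $a_1\otimes\cdots\otimes a_h\otimes\phi$, $(\iota_\xi\tilde\gamma)_{\lambda_{h+1}..\lambda_k}(a_{h+1}..a_k)=\phi^\mu(\tilde\gamma_{\lambda_1..\lambda_k}(a_1..a_k))$ with $\phi^\mu(f\otimes m)=\phi(f)m$, coefficientwise in $\lambda_{h+1},..,\lambda_k$; $\iota_\xi=0$ on $\tilde\Gamma^k$, $k<h$. *)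

theory Defs
  imports Complex_Main "HOL-Combinatorics.Permutations"
begin

text \<open>A polynomial in one variable lambda with coefficients in V (an element of
  F[lambda] (x) V) is represented by its coefficient function nat => V
  (coefficient of lambda^n), which must have finite support.
  A polynomial in lambda_1..lambda_k with coefficients in V is represented by
  its coefficient function on exponent vectors (nat lists of length k).\<close>

(* coefficient of lambda^n in lambda * p *)
definition shift :: "(nat \<Rightarrow> 'v::zero) \<Rightarrow> nat \<Rightarrow> 'v" where
  "shift p n = (case n of 0 \<Rightarrow> 0 | Suc m \<Rightarrow> p m)"

text \<open>Lie conformal algebra (A, dA, lambda-bracket br): br a b n is the
  coefficient of lambda^n in [a_lambda b].\<close>
definition lie_conformal ::
  "('f::field_char_0 \<Rightarrow> 'a::ab_group_add \<Rightarrow> 'a) \<Rightarrow> ('a \<Rightarrow> 'a) \<Rightarrow> ('a \<Rightarrow> 'a \<Rightarrow> nat \<Rightarrow> 'a) \<Rightarrow> bool"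
where
  "lie_conformal sA dA br \<longleftrightarrow>
     vector_space sA \<and> Vector_Spaces.linear sA sA dA \<and>
     (\<forall>a b. finite {n. br a b n \<noteq> 0}) \<and>
     (\<forall>a a' b n. br (a + a') b n = br a b n + br a' b n) \<and>
     (\<forall>a b b' n. br a (b + b') n = br a b n + br a b' n) \<and>
     (\<forall>c a b n. br (sA c a) b n = sA c (br a b n)) \<and>
     (\<forall>c a b n. br a (sA c b) n = sA c (br a b n)) \<and>
     \<comment> \<open>sesquilinearity: [da_lambda b] = -lambda[a_lambda b], [a_lambda db] = (d+lambda)[a_lambda b]\<close>
     (\<forall>a b n. br (dA a) b n = - shift (br a b) n) \<and>
     (\<forall>a b n. br a (dA b) n = dA (br a b n) + shift (br a b) n) \<and>
     \<comment> \<open>skew-symmetry: [b_lambda a] = - [a_{-lambda-d} b]\<close>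
     (\<forall>a b i. br b a i =
        - (\<Sum>j\<in>{j. br a b j \<noteq> 0}.
             sA ((-1) ^ j * of_nat (j choose i)) ((dA ^^ (j - i)) (br a b j)))) \<and>
     \<comment> \<open>Jacobi identity, coefficient of lambda^p mu^q in
         [a_lambda [b_mu c]] = [[a_lambda b]_{lambda+mu} c] + [b_mu [a_lambda c]]\<close>
     (\<forall>a b c p q. br a (br b c q) p =
        (\<Sum>j\<le>p. sA (of_nat ((p - j + q) choose q)) (br (br a b j) c (p - j + q)))
        + br b (br a c p) q)"

definition conformal_module ::
  "('f::field_char_0 \<Rightarrow> 'a::ab_group_add \<Rightarrow> 'a) \<Rightarrow> ('a \<Rightarrow> 'a) \<Rightarrow> ('a \<Rightarrow> 'a \<Rightarrow> nat \<Rightarrow> 'a) \<Rightarrow>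
   ('f \<Rightarrow> 'm::ab_group_add \<Rightarrow> 'm) \<Rightarrow> ('m \<Rightarrow> 'm) \<Rightarrow> ('a \<Rightarrow> 'm \<Rightarrow> nat \<Rightarrow> 'm) \<Rightarrow> bool"
where
  "conformal_module sA dA br sM dM act \<longleftrightarrow>
     lie_conformal sA dA br \<and>
     vector_space sM \<and> Vector_Spaces.linear sM sM dM \<and>
     (\<forall>a m. finite {n. act a m n \<noteq> 0}) \<and>
     (\<forall>a a' m n. act (a + a') m n = act a m n + act a' m n) \<and>
     (\<forall>a m m' n. act a (m + m') n = act a m n + act a m' n) \<and>
     (\<forall>c a m n. act (sA c a) m n = sM c (act a m n)) \<and>
     (\<forall>c a m n. act a (sM c m) n = sM c (act a m n)) \<and>
     (\<forall>a m n. act (dA a) m n = - shift (act a m) n) \<and>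
     (\<forall>a m n. act a (dM m) n = dM (act a m n) + shift (act a m) n) \<and>
     \<comment> \<open>[a_lambda b]_{lambda+mu} m = a_lambda (b_mu m) - b_mu (a_lambda m), coefficient of lambda^p mu^q\<close>
     (\<forall>a b m p q.
        (\<Sum>j\<le>p. sM (of_nat ((p - j + q) choose q)) (act (br a b j) m (p - j + q)))
        = act a (act b m q) p - act b (act a m p) q)"

definition derivation_product ::
  "('f::field_char_0 \<Rightarrow> 'm::ab_group_add \<Rightarrow> 'm) \<Rightarrow> ('m \<Rightarrow> 'm) \<Rightarrow> ('a \<Rightarrow> 'm \<Rightarrow> nat \<Rightarrow> 'm) \<Rightarrow>
   ('m \<Rightarrow> 'm \<Rightarrow> 'm) \<Rightarrow> bool"
where
  "derivation_product sM dM act mul \<longleftrightarrow>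
     (\<forall>x x' y. mul (x + x') y = mul x y + mul x' y) \<and>
     (\<forall>c x y. mul (sM c x) y = sM c (mul x y)) \<and>
     (\<forall>x y. mul x y = mul y x) \<and>
     (\<forall>x y z. mul (mul x y) z = mul x (mul y z)) \<and>
     (\<forall>x y. dM (mul x y) = mul (dM x) y + mul x (dM y)) \<and>
     (\<forall>a x y n. act a (mul x y) n = mul (act a x n) y + mul x (act a y n))"

text \<open>A k-cochain g: g as e is the coefficient of lambda^e (e an exponent vector
  of length k) in g_{lambda_1..lambda_k}(a_1,..,a_k), as = [a_1,..,a_k].
  Values on inputs of the wrong length are normalised to 0.\<close>

definition cochain ::
  "('f::field_char_0 \<Rightarrow> 'a::ab_group_add \<Rightarrow> 'a) \<Rightarrow> ('a \<Rightarrow> 'a) \<Rightarrow> ('f \<Rightarrow> 'm::ab_group_add \<Rightarrow> 'm) \<Rightarrow>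
   nat \<Rightarrow> ('a list \<Rightarrow> nat list \<Rightarrow> 'm) \<Rightarrow> bool"
where
  "cochain sA dA sM k g \<longleftrightarrow>
     (\<forall>as e. length as \<noteq> k \<or> length e \<noteq> k \<longrightarrow> g as e = 0) \<and>
     (\<forall>as. finite {e. g as e \<noteq> 0}) \<and>
     (\<forall>as i x y e. length as = k \<longrightarrow> i < k \<longrightarrow>
        g (as[i := x + y]) e = g (as[i := x]) e + g (as[i := y]) e) \<and>
     (\<forall>as i c x e. length as = k \<longrightarrow> i < k \<longrightarrow>
        g (as[i := sA c x]) e = sM c (g (as[i := x]) e)) \<and>
     \<comment> \<open>g(.., d a_i, ..) = - lambda_i g(..)\<close>
     (\<forall>as i e. length as = k \<longrightarrow> length e = k \<longrightarrow> i < k \<longrightarrow>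
        g (as[i := dA (as ! i)]) e =
          - (if e ! i = 0 then 0 else g as (e[i := e ! i - 1]))) \<and>
     \<comment> \<open>skew-symmetry under simultaneous permutation of the a_i and lambda_i\<close>
     (\<forall>as e \<sigma>. length as = k \<longrightarrow> length e = k \<longrightarrow> \<sigma> permutes {..<k} \<longrightarrow>
        g (map (\<lambda>j. as ! \<sigma> j) [0..<k]) (map (\<lambda>j. e ! \<sigma> j) [0..<k])
          = sM (of_int (sign \<sigma>)) (g as e))"

text \<open>(dg)_{lambda} = (dM + lambda_1 + .. + lambda_k) g_{lambda}\<close>
definition dcoch ::
  "('m::ab_group_add \<Rightarrow> 'm) \<Rightarrow> nat \<Rightarrow> ('a list \<Rightarrow> nat list \<Rightarrow> 'm) \<Rightarrow> 'a list \<Rightarrow> nat list \<Rightarrow> 'm"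
where
  "dcoch dM k g = (\<lambda>as e. if length as = k \<and> length e = k then
      dM (g as e) + (\<Sum>i<k. if e ! i = 0 then 0 else g as (e[i := e ! i - 1]))
    else 0)"

text \<open>A generator a_1 (x) .. (x) a_h (x) phi of A^{(x)h} (x) Hom(F[lambda_1..lambda_h], M)
  is a pair (as, phi), where phi is given by its values on the monomials
  lambda^e (e of length h; phi normalised to 0 on other lists).  Elements of
  the free F-vector space on generators are finitely supported functions
  xi :: generator => F; \<open>\<tilde>\<Gamma>\<^sub>h\<close> is its quotient by the subspace chain_null h
  spanned by the multilinearity relations and (C1), (C2).\<close>

definition valid_gen :: "nat \<Rightarrow> 'a list \<times> (nat list \<Rightarrow> 'm::zero) \<Rightarrow> bool" where
  "valid_gen h p \<longleftrightarrow> length (fst p) = h \<and> (\<forall>e. length e \<noteq> h \<longrightarrow> snd p e = 0)"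

definition chain_rep :: "nat \<Rightarrow> ('a list \<times> (nat list \<Rightarrow> 'm::zero) \<Rightarrow> 'f::zero) \<Rightarrow> bool" where
  "chain_rep h \<xi> \<longleftrightarrow> finite {p. \<xi> p \<noteq> 0} \<and> (\<forall>p. \<xi> p \<noteq> 0 \<longrightarrow> valid_gen h p)"

definition delta :: "'g \<Rightarrow> 'g \<Rightarrow> 'f::{zero,one}" where
  "delta g = (\<lambda>p. if p = g then 1 else 0)"

(* (lambda_i^* phi)(f) = phi(lambda_i f) *)
definition lam_star :: "nat \<Rightarrow> nat \<Rightarrow> (nat list \<Rightarrow> 'm::zero) \<Rightarrow> nat list \<Rightarrow> 'm" where
  "lam_star h i \<phi> = (\<lambda>e. if length e = h then \<phi> (e[i := e ! i + 1]) else 0)"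

(* (sigma^* phi)(f) = phi(f(lambda_sigma(1),..,lambda_sigma(h))) *)
definition perm_star :: "nat \<Rightarrow> (nat \<Rightarrow> nat) \<Rightarrow> (nat list \<Rightarrow> 'm::zero) \<Rightarrow> nat list \<Rightarrow> 'm" where
  "perm_star h \<sigma> \<phi> = (\<lambda>e. if length e = h then \<phi> (map (\<lambda>j. e ! inv \<sigma> j) [0..<h]) else 0)"

inductive_set chain_null ::
  "('f::field_char_0 \<Rightarrow> 'a::ab_group_add \<Rightarrow> 'a) \<Rightarrow> ('a \<Rightarrow> 'a) \<Rightarrow> ('f \<Rightarrow> 'm::ab_group_add \<Rightarrow> 'm) \<Rightarrow>
   nat \<Rightarrow> ('a list \<times> (nat list \<Rightarrow> 'm) \<Rightarrow> 'f) set"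
  for sA dA sM h
where
  zero: "(\<lambda>p. 0) \<in> chain_null sA dA sM h"
| add: "\<xi> \<in> chain_null sA dA sM h \<Longrightarrow> \<eta> \<in> chain_null sA dA sM h \<Longrightarrow>
     (\<lambda>p. \<xi> p + \<eta> p) \<in> chain_null sA dA sM h"
| scale: "\<xi> \<in> chain_null sA dA sM h \<Longrightarrow> (\<lambda>p. c * \<xi> p) \<in> chain_null sA dA sM h"
| lin_add_a: "valid_gen h (as, \<phi>) \<Longrightarrow> i < h \<Longrightarrow>
     (\<lambda>p. delta (as[i := x + y], \<phi>) p - delta (as[i := x], \<phi>) p - delta (as[i := y], \<phi>) p)
       \<in> chain_null sA dA sM h"
| lin_scale_a: "valid_gen h (as, \<phi>) \<Longrightarrow> i < h \<Longrightarrow>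
     (\<lambda>p. delta (as[i := sA c x], \<phi>) p - c * delta (as[i := x], \<phi>) p) \<in> chain_null sA dA sM h"
| lin_add_phi: "valid_gen h (as, \<phi>) \<Longrightarrow> valid_gen h (as, \<psi>) \<Longrightarrow>
     (\<lambda>p. delta (as, \<lambda>e. \<phi> e + \<psi> e) p - delta (as, \<phi>) p - delta (as, \<psi>) p)
       \<in> chain_null sA dA sM h"
| lin_scale_phi: "valid_gen h (as, \<phi>) \<Longrightarrow>
     (\<lambda>p. delta (as, \<lambda>e. sM c (\<phi> e)) p - c * delta (as, \<phi>) p) \<in> chain_null sA dA sM h"
| C1: "valid_gen h (as, \<phi>) \<Longrightarrow> i < h \<Longrightarrow>
     (\<lambda>p. delta (as[i := dA (as ! i)], \<phi>) p + delta (as, lam_star h i \<phi>) p) \<in> chain_null sA dA sM h"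
| C2: "valid_gen h (as, \<phi>) \<Longrightarrow> \<sigma> permutes {..<h} \<Longrightarrow>
     (\<lambda>p. delta (map (\<lambda>j. as ! \<sigma> j) [0..<h], perm_star h \<sigma> \<phi>) p - of_int (sign \<sigma>) * delta (as, \<phi>) p)
       \<in> chain_null sA dA sM h"

text \<open>d(a_1 (x) .. (x) a_h (x) phi) = a_1 (x) .. (x) a_h (x) (-lambda_1^* - .. - lambda_h^* + d) phi,
  extended linearly to the free vector space.\<close>
definition dgen_phi :: "('m::ab_group_add \<Rightarrow> 'm) \<Rightarrow> nat \<Rightarrow> (nat list \<Rightarrow> 'm) \<Rightarrow> nat list \<Rightarrow> 'm" where
  "dgen_phi dM h \<phi> = (\<lambda>e. if length e = h then
      dM (\<phi> e) - (\<Sum>i<h. lam_star h i \<phi> e) else 0)"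

definition dchain ::
  "('m::ab_group_add \<Rightarrow> 'm) \<Rightarrow> nat \<Rightarrow> ('a list \<times> (nat list \<Rightarrow> 'm) \<Rightarrow> 'f::comm_ring_1)
   \<Rightarrow> 'a list \<times> (nat list \<Rightarrow> 'm) \<Rightarrow> 'f"
where
  "dchain dM h \<xi> = (\<lambda>(as, \<psi>).
     \<Sum>p\<in>{p. \<xi> p \<noteq> 0 \<and> fst p = as \<and> dgen_phi dM h (snd p) = \<psi>}. \<xi> p)"

text \<open>For a generator (as, phi) and a k-cochain g (k \<ge> h):
  (iota g)_{lambda_{h+1}..lambda_k}(bs) = phi^mu(g_{lambda_1..lambda_k}(as @ bs)),
  with phi^mu(f (x) m) = mul (phi f) m, coefficientwise in lambda_{h+1}..lambda_k.\<close>
definition contr_gen ::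
  "('m::ab_group_add \<Rightarrow> 'm \<Rightarrow> 'm) \<Rightarrow> nat \<Rightarrow> 'a list \<Rightarrow> (nat list \<Rightarrow> 'm) \<Rightarrow>
   ('a list \<Rightarrow> nat list \<Rightarrow> 'm) \<Rightarrow> 'a list \<Rightarrow> nat list \<Rightarrow> 'm"
where
  "contr_gen mul h as \<phi> g bs e' =
     (\<Sum>e\<in>{e. length e = h \<and> g (as @ bs) (e @ e') \<noteq> 0}. mul (\<phi> e) (g (as @ bs) (e @ e')))"

definition iota ::
  "('f::field_char_0 \<Rightarrow> 'm::ab_group_add \<Rightarrow> 'm) \<Rightarrow> ('m \<Rightarrow> 'm \<Rightarrow> 'm) \<Rightarrow> nat \<Rightarrow> nat \<Rightarrow>
   ('a list \<times> (nat list \<Rightarrow> 'm) \<Rightarrow> 'f) \<Rightarrow> ('a list \<Rightarrow> nat list \<Rightarrow> 'm) \<Rightarrow> 'a list \<Rightarrow> nat list \<Rightarrow> 'm"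
where
  "iota sM mul h k \<xi> g = (\<lambda>bs e'.
     if h \<le> k \<and> length bs = k - h \<and> length e' = k - h then
       (\<Sum>p\<in>{p. \<xi> p \<noteq> 0}. sM (\<xi> p) (contr_gen mul h (fst p) (snd p) g bs e'))
     else 0)"

end

theory Submission
  imports Defs
begin

text \<open>Both sides of \<open>[\<partial>, \<iota>\<^sub>\<xi>] = \<iota>\<^sub>\<partial>\<^sub>\<xi>\<close> are linear in \<open>\<xi>\<close>, so it suffices to take a
  generator \<open>\<xi> = a\<^sub>1 \<otimes> \<dots> \<otimes> a\<^sub>h \<otimes> \<phi>\<close>, whose contraction is a finite sum over the exponent
  vectors of \<open>\<lambda>\<^sub>1 \<dots> \<lambda>\<^sub>h\<close>.  Since \<open>\<partial>\<^sup>M\<close> is a derivation of the product, it splits into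
  \<open>\<partial>\<phi>\<close> and \<open>\<partial>\<^sup>M\<close> on the cochain.  Of the shifts \<open>\<lambda>\<^sub>1 + \<dots> + \<lambda>\<^sub>k\<close> in \<open>\<partial>\<gamma>\<close>, the first
  \<open>h\<close> move onto \<open>\<phi>\<close> by reindexing the exponent sum, where they become \<open>-\<lambda>\<^sub>i\<^sup>*\<phi>\<close>, and the
  others are exactly the shifts of \<open>\<partial>\<close> on \<open>\<tilde>\<Gamma>\<^sup>k\<^sup>-\<^sup>h\<close>; what remains is
  \<open>\<iota>\<close> of \<open>a\<^sub>1 \<otimes> \<dots> \<otimes> a\<^sub>h \<otimes> (\<partial> - \<Sum> \<lambda>\<^sub>i\<^sup>*)\<phi>\<close>.

  Contraction kills the multilinearity relations, (C1) by sesquilinearity of \<open>\<gamma>\<close> and (C2) by its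
  skew-symmetry, so \<open>\<iota>\<^sub>\<xi>\<close> only depends on the class of \<open>\<xi>\<close> in \<open>\<tilde>\<Gamma>\<^sub>h\<close>; for
  \<open>\<xi> \<in> \<Gamma>\<^sub>h\<close> this gives \<open>\<iota>\<^sub>\<partial>\<^sub>\<xi> = 0\<close>.  In the remaining slots the contraction inherits
  sesquilinearity and skew-symmetry, so it maps cochains to cochains and, commuting with \<open>\<partial>\<close>,
  \<open>\<partial>\<tilde>\<Gamma>\<^sup>k\<close> into \<open>\<partial>\<tilde>\<Gamma>\<^sup>k\<^sup>-\<^sup>h\<close>.\<close>

subsection \<open>Finite sums over exponent vectors\<close>

definition len_sum :: "nat \<Rightarrow> (nat list \<Rightarrow> 'm::ab_group_add) \<Rightarrow> 'm" where
  "len_sum n F = sum F {e. length e = n \<and> F e \<noteq> 0}"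

definition len_finite :: "nat \<Rightarrow> (nat list \<Rightarrow> 'm::zero) \<Rightarrow> bool" where
  "len_finite n F \<longleftrightarrow> finite {e. length e = n \<and> F e \<noteq> 0}"

lemma len_sum_superset:
  assumes "finite A" "{e. length e = n \<and> F e \<noteq> 0} \<subseteq> A" "A \<subseteq> {e. length e = n}"
  shows "len_sum n F = sum F A"
  unfolding len_sum_def using assms by (intro sum.mono_neutral_left) auto

lemma len_sum_cong: "(\<And>e. length e = n \<Longrightarrow> F e = G e) \<Longrightarrow> len_sum n F = len_sum n G"
  unfolding len_sum_def by (rule sum.cong) auto

lemma len_finite_subset:
  "len_finite n F \<Longrightarrow> (\<And>e. length e = n \<Longrightarrow> G e \<noteq> 0 \<Longrightarrow> F e \<noteq> 0) \<Longrightarrow> len_finite n G"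
  unfolding len_finite_def by (erule finite_subset[rotated]) auto

lemma len_finite_image:
  "finite B \<Longrightarrow> (\<And>e. length e = n \<Longrightarrow> F e \<noteq> 0 \<Longrightarrow> e \<in> f ` B) \<Longrightarrow> len_finite n F"
  unfolding len_finite_def by (rule finite_subset[of _ "f ` B"]) auto

lemma len_finite_add:
  fixes F G :: "nat list \<Rightarrow> 'm::monoid_add"
  shows "len_finite n F \<Longrightarrow> len_finite n G \<Longrightarrow> len_finite n (\<lambda>e. F e + G e)"
  unfolding len_finite_def
  by (rule finite_subset[of _ "{e. length e = n \<and> F e \<noteq> 0} \<union> {e. length e = n \<and> G e \<noteq> 0}"])
    auto

lemma len_finite_sum:
  "finite I \<Longrightarrow> (\<And>i. i \<in> I \<Longrightarrow> len_finite n (F i)) \<Longrightarrow> len_finite n (\<lambda>e. \<Sum>i\<in>I. F i e)"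
proof (induction I rule: finite_induct)
  case (insert i I)
  then show ?case using len_finite_add[of n "F i"] by simp
qed (simp add: len_finite_def)

lemma len_sum_add:
  assumes "len_finite n F" "len_finite n G"
  shows "len_sum n (\<lambda>e. F e + G e) = len_sum n F + len_sum n G"
proof -
  let ?A = "{e. length e = n \<and> F e \<noteq> 0} \<union> {e. length e = n \<and> G e \<noteq> 0}"
  have A: "finite ?A" using assms unfolding len_finite_def by auto
  have "len_sum n (\<lambda>e. F e + G e) = sum (\<lambda>e. F e + G e) ?A"
    by (rule len_sum_superset[OF A]) auto
  moreover have "len_sum n F = sum F ?A" "len_sum n G = sum G ?A"
    by (rule len_sum_superset[OF A]; auto)+
  ultimately show ?thesis by (simp add: sum.distrib)
qed

lemma len_sum_additive:
  assumes "len_finite n F" "additive f"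
  shows "len_sum n (\<lambda>e. f (F e)) = f (len_sum n F)"
proof -
  let ?A = "{e. length e = n \<and> F e \<noteq> 0}"
  have A: "finite ?A" using assms(1) unfolding len_finite_def .
  have "len_sum n (\<lambda>e. f (F e)) = sum (\<lambda>e. f (F e)) ?A"
    by (rule len_sum_superset[OF A]) (auto simp: additive.zero[OF assms(2)])
  then show ?thesis by (simp add: additive.sum[OF assms(2)] len_sum_def)
qed

lemma len_sum_neg: "len_finite n F \<Longrightarrow> len_sum n (\<lambda>e. - F e) = - len_sum n F"
  by (rule len_sum_additive) (simp_all add: additive_def)

lemma len_sum_diff:
  assumes "len_finite n F" "len_finite n G"
  shows "len_sum n (\<lambda>e. F e - G e) = len_sum n F - len_sum n G"
proof -
  have "len_finite n (\<lambda>e. - G e)" using assms(2) by (rule len_finite_subset) simp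
  then show ?thesis
    unfolding diff_conv_add_uminus len_sum_add[OF assms(1) \<open>len_finite n (\<lambda>e. - G e)\<close>]
    by (simp add: len_sum_neg[OF assms(2)])
qed

lemma len_sum_sum:
  "finite I \<Longrightarrow> (\<And>i. i \<in> I \<Longrightarrow> len_finite n (F i)) \<Longrightarrow>
   len_sum n (\<lambda>e. \<Sum>i\<in>I. F i e) = (\<Sum>i\<in>I. len_sum n (F i))"
proof (induction I rule: finite_induct)
  case (insert i I)
  then have "len_sum n (\<lambda>e. F i e + (\<Sum>i\<in>I. F i e)) = len_sum n (F i) + (\<Sum>i\<in>I. len_sum n (F i))"
    using len_sum_add[of n "F i"] len_finite_sum[of I n F] by simp
  with insert.hyps show ?case by simp
qed (simp add: len_sum_def)

lemma len_sum_reindex: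
  assumes inj: "inj_on T {e. length e = n}" and img: "T ` {e. length e = n} \<subseteq> {e. length e = n}"
    and vanish: "\<And>e. length e = n \<Longrightarrow> e \<notin> T ` {e. length e = n} \<Longrightarrow> F e = 0"
  shows "len_sum n (\<lambda>e. F (T e)) = len_sum n F"
proof -
  let ?A = "{e. length e = n \<and> F (T e) \<noteq> 0}"
  have "T ` ?A = {e. length e = n \<and> F e \<noteq> 0}"
    using img vanish by fastforce
  moreover have "inj_on T ?A" by (rule inj_on_subset[OF inj]) auto
  ultimately show ?thesis
    unfolding len_sum_def by (metis (no_types, lifting) sum.reindex_cong)
qed

lemma len_sum_shift:
  assumes i: "i < n"
  shows "len_sum n (\<lambda>e. if e ! i = 0 then 0 else H e (e[i := e ! i - 1]))
       = len_sum n (\<lambda>f. H (f[i := f ! i + 1]) f)"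
proof -
  let ?T = "\<lambda>f::nat list. f[i := f ! i + 1]"
  have inj: "inj_on ?T {e. length e = n}"
  proof (rule inj_onI)
    fix x y assume "x \<in> {e. length e = n}" "y \<in> {e. length e = n}" "?T x = ?T y"
    then have "x[i := x ! i] = y[i := y ! i]"
      by (metis add_right_cancel i mem_Collect_eq list_update_overwrite nth_list_update_eq)
    then show "x = y" by simp
  qed
  have vanish: "(if e ! i = 0 then 0 else H e (e[i := e ! i - 1])) = 0"
    if "length e = n" "e \<notin> ?T ` {e. length e = n}" for e
  proof (rule ccontr)
    assume "(if e ! i = 0 then 0 else H e (e[i := e ! i - 1])) \<noteq> 0"
    then have "e = ?T (e[i := e ! i - 1])" using that(1) i by (auto split: if_splits)
    then have "e \<in> ?T ` {e. length e = n}" by (rule image_eqI) (simp add: that(1))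
    with that(2) show False ..
  qed
  have "len_sum n (\<lambda>e. if e ! i = 0 then 0 else H e (e[i := e ! i - 1]))
      = len_sum n (\<lambda>f. (\<lambda>e. if e ! i = 0 then 0 else H e (e[i := e ! i - 1])) (?T f))"
    by (rule len_sum_reindex[OF inj _ vanish, symmetric]) auto
  also have "\<dots> = len_sum n (\<lambda>f. H (f[i := f ! i + 1]) f)"
    by (rule len_sum_cong) (simp add: i)
  finally show ?thesis .
qed

lemma len_sum_permute:
  assumes \<sigma>: "\<sigma> permutes {..<n}"
  shows "len_sum n (\<lambda>e. F (permute_list \<sigma> e)) = len_sum n F"
proof -
  have permute_inv: "permute_list (inv \<sigma>) (permute_list \<sigma> e) = e"
    "permute_list \<sigma> (permute_list (inv \<sigma>) e) = e" if "length e = n" for e :: "nat list"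
    using that permute_list_compose[of "inv \<sigma>" e \<sigma>] permute_list_compose[of \<sigma> e "inv \<sigma>"]
      permutes_inv[OF \<sigma>] \<sigma> by (simp_all add: permutes_inv_o)
  have "inj_on (permute_list \<sigma>) {e :: nat list. length e = n}"
    by (rule inj_on_inverseI[of _ "permute_list (inv \<sigma>)"]) (use permute_inv(1) in blast)
  moreover have "e \<in> permute_list \<sigma> ` {e. length e = n}" if "length e = n" for e :: "nat list"
    by (rule image_eqI[of _ _ "permute_list (inv \<sigma>) e"]) (simp_all add: that permute_inv)
  ultimately show ?thesis
    by (intro len_sum_reindex) auto
qed

lemma len_finite_append:
  "finite {f. G f \<noteq> 0} \<Longrightarrow> (\<And>e. length e = n \<Longrightarrow> F e \<noteq> 0 \<Longrightarrow> G (e @ e') \<noteq> 0) \<Longrightarrow> len_finite n F"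
  by (rule len_finite_image[of "{f. G f \<noteq> 0}" _ _ "take n"]) (auto intro!: image_eqI[where x="_ @ e'"])

lemma len_finite_append_shift:
  assumes G: "finite {f. G f \<noteq> 0}"
    and F: "\<And>e. length e = n \<Longrightarrow> F e \<noteq> 0 \<Longrightarrow> e ! i \<noteq> 0 \<and> G (e[i := e ! i - 1] @ e') \<noteq> 0"
    and i: "i < n"
  shows "len_finite n F"
proof (rule len_finite_image[OF G])
  fix e assume e: "length e = n" "F e \<noteq> 0"
  with F have "e ! i \<noteq> 0" "G (e[i := e ! i - 1] @ e') \<noteq> 0" by auto
  moreover have "e = (take n (e[i := e ! i - 1] @ e'))[i := take n (e[i := e ! i - 1] @ e') ! i + 1]"
    using e calculation i by simp
  ultimately show "e \<in> (\<lambda>x. (take n x)[i := take n x ! i + 1]) ` {f. G f \<noteq> 0}" by blast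
qed

lemma permute_list_append_shift:
  fixes xs ys :: "'a list" and \<sigma> :: "nat \<Rightarrow> nat"
  defines "\<tau> \<equiv> map_permutation {..<length ys} ((+) (length xs)) \<sigma>"
  assumes \<sigma>: "\<sigma> permutes {..<length ys}"
  shows "\<tau> permutes {..<length xs + length ys}" "sign \<tau> = sign \<sigma>"
    and "permute_list \<tau> (xs @ ys) = xs @ permute_list \<sigma> ys"
proof -
  let ?h = "length xs" and ?n = "length ys"
  have inj: "inj_on ((+) ?h) {..<?n}" by simp
  have "\<tau> permutes (+) ?h ` {..<?n}"
    unfolding \<tau>_def by (rule map_permutation_permutes[OF inj_on_imp_bij_betw[OF inj] \<sigma>])
  then show \<tau>: "\<tau> permutes {..<?h + ?n}"
    by (rule permutes_subset) auto
  show "sign \<tau> = sign \<sigma>" unfolding \<tau>_def by (rule sign_map_permutation[OF inj \<sigma>]) simp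
  have low: "\<tau> j = j" if "j < ?h" for j
  proof (rule permutes_not_in[OF \<open>\<tau> permutes (+) ?h ` {..<?n}\<close>])
    show "j \<notin> (+) ?h ` {..<?n}" using that by auto
  qed
  have high: "\<tau> (?h + m) = ?h + \<sigma> m" if "m < ?n" for m
    unfolding \<tau>_def using map_permutation_apply[OF inj] that by simp
  show "permute_list \<tau> (xs @ ys) = xs @ permute_list \<sigma> ys"
  proof (rule nth_equalityI)
    fix j assume "j < length (permute_list \<tau> (xs @ ys))"
    then have j: "j < ?h + ?n" by simp
    show "permute_list \<tau> (xs @ ys) ! j = (xs @ permute_list \<sigma> ys) ! j"
    proof (cases "j < ?h")
      case False
      then obtain m where m: "j = ?h + m" "m < ?n" using j le_Suc_ex by force
      then show ?thesis
        using permute_list_nth[OF \<tau>[folded length_append]] permute_list_nth[OF \<sigma>] permutes_in_image[OF \<sigma>] high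
        by (simp add: nth_append)
    qed (use permute_list_nth[OF \<tau>[folded length_append]] j low in \<open>simp add: nth_append\<close>)
  qed simp
qed

lemma sum_lessThan_split:
  assumes "h \<le> (k::nat)"
  shows "(\<Sum>i<k. f i) = (\<Sum>i<h. f i) + (\<Sum>i<k - h. f (h + i))"
proof -
  obtain d where "k = h + d" using assms le_Suc_ex by blast
  then show ?thesis by (induction d arbitrary: k) (auto simp: ac_simps)
qed

subsection \<open>Cochains and the product on \<open>M\<close>\<close>

lemma
  assumes "cochain sA dA sM k g"
  shows cochain_finite: "finite {e. g as e \<noteq> 0}"
    and cochain_add: "length as = k \<Longrightarrow> i < k \<Longrightarrow>
      g (as[i := x + y]) e = g (as[i := x]) e + g (as[i := y]) e"
    and cochain_scale: "length as = k \<Longrightarrow> i < k \<Longrightarrow> g (as[i := sA c x]) e = sM c (g (as[i := x]) e)"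
    and cochain_dA: "length as = k \<Longrightarrow> length e = k \<Longrightarrow> i < k \<Longrightarrow>
      g (as[i := dA (as ! i)]) e = - (if e ! i = 0 then 0 else g as (e[i := e ! i - 1]))"
    and cochain_permute: "length as = k \<Longrightarrow> length e = k \<Longrightarrow> \<sigma> permutes {..<k} \<Longrightarrow>
      g (permute_list \<sigma> as) (permute_list \<sigma> e) = sM (of_int (sign \<sigma>)) (g as e)"
  using assms unfolding cochain_def permute_list_def by auto

lemma dcoch_append:
  assumes "h \<le> k" "length as = k" "length e = h" "length e' = k - h"
  shows "dcoch dM k g as (e @ e') = dM (g as (e @ e'))
      + (\<Sum>i<h. if e ! i = 0 then 0 else g as (e[i := e ! i - 1] @ e'))
      + (\<Sum>i<k - h. if e' ! i = 0 then 0 else g as (e @ e'[i := e' ! i - 1]))"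
  using assms by (simp add: dcoch_def sum_lessThan_split[OF assms(1)] nth_append list_update_append
      add.assoc cong: if_cong)

definition finite_support :: "('p \<Rightarrow> 'f::zero) \<Rightarrow> bool" where
  "finite_support \<xi> \<longleftrightarrow> finite {p. \<xi> p \<noteq> 0}"

lemma finite_support_delta [simp]: "finite_support (delta x :: 'p \<Rightarrow> 'f::{zero,one})"
  unfolding finite_support_def by (rule finite_subset[of _ "{x}"]) (auto simp: delta_def)

lemma finite_support_add [simp]:
  fixes \<xi> \<eta> :: "'p \<Rightarrow> 'f::monoid_add"
  shows "finite_support \<xi> \<Longrightarrow> finite_support \<eta> \<Longrightarrow> finite_support (\<lambda>p. \<xi> p + \<eta> p)"
  unfolding finite_support_def
  by (rule finite_subset[of _ "{p. \<xi> p \<noteq> 0} \<union> {p. \<eta> p \<noteq> 0}"]) auto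

lemma finite_support_diff [simp]:
  fixes \<xi> \<eta> :: "'p \<Rightarrow> 'f::group_add"
  shows "finite_support \<xi> \<Longrightarrow> finite_support \<eta> \<Longrightarrow> finite_support (\<lambda>p. \<xi> p - \<eta> p)"
  unfolding finite_support_def
  by (rule finite_subset[of _ "{p. \<xi> p \<noteq> 0} \<union> {p. \<eta> p \<noteq> 0}"]) auto

lemma finite_support_mult [simp]:
  fixes \<xi> :: "'p \<Rightarrow> 'f::mult_zero"
  shows "finite_support \<xi> \<Longrightarrow> finite_support (\<lambda>p. c * \<xi> p)"
  unfolding finite_support_def by (rule finite_subset[of _ "{p. \<xi> p \<noteq> 0}"]) auto

lemma dchain_eq_sum:
  "dchain dM h \<xi> q = (\<Sum>p\<in>{p. \<xi> p \<noteq> 0 \<and> (fst p, dgen_phi dM h (snd p)) = q}. \<xi> p)"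
  by (simp add: dchain_def prod_eq_iff split: prod.split)

lemma finite_support_chain_null: "\<eta> \<in> chain_null sA dA sM h \<Longrightarrow> finite_support \<eta>"
  by (induction rule: chain_null.induct) (simp_all add: finite_support_def[of "\<lambda>p. 0"])

locale comm_derivation_product = vector_space sM + dM: Vector_Spaces.linear sM sM dM
  for sM :: "'f::field_char_0 \<Rightarrow> 'm::ab_group_add \<Rightarrow> 'm" and dM :: "'m \<Rightarrow> 'm" +
  fixes mul :: "'m \<Rightarrow> 'm \<Rightarrow> 'm"
  assumes mul_add_left: "mul (x + x') y = mul x y + mul x' y"
    and mul_scale_left: "mul (sM c x) y = sM c (mul x y)"
    and mul_commute: "mul x y = mul y x"
    and dM_mul: "dM (mul x y) = mul (dM x) y + mul x (dM y)"
begin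

lemma additive_mul_left: "additive (\<lambda>x. mul x y)"
  by unfold_locales (rule mul_add_left)

lemma additive_mul_right: "additive (\<lambda>y. mul x y)"
  by unfold_locales (simp add: mul_commute[of x] mul_add_left)

lemma additive_scale: "additive (sM c)"
  by unfold_locales (rule scale_right_distrib)

lemmas mul_add_right = additive.add[OF additive_mul_right]
  and mul_zero_right [simp] = additive.zero[OF additive_mul_right]
  and mul_minus_right = additive.minus[OF additive_mul_right]
  and mul_diff_left = additive.diff[OF additive_mul_left]
  and mul_sum_left = additive.sum[OF additive_mul_left]
  and mul_sum_right = additive.sum[OF additive_mul_right]

lemma mul_scale_right: "mul x (sM c y) = sM c (mul x y)"
  by (simp add: mul_commute[of x] mul_scale_left)

lemma dcoch_finite:
  assumes "cochain sA dA sM k g"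
  shows "finite {f. dcoch dM k g as f \<noteq> 0}"
proof -
  let ?S = "{f. g as f \<noteq> 0}"
  have "{f. dcoch dM k g as f \<noteq> 0} \<subseteq> ?S \<union> (\<Union>i<k. (\<lambda>f. f[i := f ! i + 1]) ` ?S)"
  proof
    fix f assume "f \<in> {f. dcoch dM k g as f \<noteq> 0}"
    then have len: "length as = k" "length f = k"
      and nz: "dM (g as f) + (\<Sum>i<k. if f ! i = 0 then 0 else g as (f[i := f ! i - 1])) \<noteq> 0"
      unfolding dcoch_def by (auto split: if_splits)
    show "f \<in> ?S \<union> (\<Union>i<k. (\<lambda>f. f[i := f ! i + 1]) ` ?S)"
    proof (cases "g as f = 0")
      case True
      with nz obtain i where "i < k" "(if f ! i = 0 then 0 else g as (f[i := f ! i - 1])) \<noteq> 0"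
        by (auto elim: sum.not_neutral_contains_not_neutral)
      then have i: "i < k" "f ! i \<noteq> 0" "g as (f[i := f ! i - 1]) \<noteq> 0" by (auto split: if_splits)
      have "f = (f[i := f ! i - 1])[i := f[i := f ! i - 1] ! i + 1]" using i len by simp
      then have "f \<in> (\<lambda>f. f[i := f ! i + 1]) ` ?S" by (rule image_eqI) (use i(3) in simp)
      then show ?thesis using i(1) by blast
    qed simp
  qed
  moreover have "finite (?S \<union> (\<Union>i<k. (\<lambda>f. f[i := f ! i + 1]) ` ?S))"
    using cochain_finite[OF assms] by auto
  ultimately show ?thesis by (rule finite_subset)
qed

subsection \<open>Contraction with a single generator\<close>

lemma contr_gen_eq_len_sum:
  assumes "finite {f. g (as @ bs) f \<noteq> 0}"
  shows "contr_gen mul h as \<phi> g bs e' = len_sum h (\<lambda>e. mul (\<phi> e) (g (as @ bs) (e @ e')))"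
proof -
  have "len_finite h (\<lambda>e. g (as @ bs) (e @ e'))" by (rule len_finite_append[OF assms]) auto
  then show ?thesis
    unfolding contr_gen_def len_finite_def by (intro len_sum_superset[symmetric]) auto
qed

lemma len_finite_contr: "finite {f. G f \<noteq> 0} \<Longrightarrow> len_finite h (\<lambda>e. mul (\<phi> e) (G (e @ e')))"
  by (rule len_finite_append[where e'=e']) auto

lemma contr_gen_add:
  assumes g: "cochain sA dA sM k g"
    and split: "\<And>f. g (as @ bs) f = g (as1 @ bs1) f + g (as2 @ bs2) f"
  shows "contr_gen mul h as \<phi> g bs e' = contr_gen mul h as1 \<phi> g bs1 e' + contr_gen mul h as2 \<phi> g bs2 e'"
  unfolding contr_gen_eq_len_sum[OF cochain_finite[OF g]] split mul_add_right
  by (intro len_sum_add len_finite_contr cochain_finite[OF g])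

lemma contr_gen_scale:
  assumes g: "cochain sA dA sM k g"
    and split: "\<And>f. g (as @ bs) f = sM c (g (as1 @ bs1) f)"
  shows "contr_gen mul h as \<phi> g bs e' = sM c (contr_gen mul h as1 \<phi> g bs1 e')"
  unfolding contr_gen_eq_len_sum[OF cochain_finite[OF g]] split mul_scale_right
  by (intro len_sum_additive len_finite_contr cochain_finite[OF g] additive_scale)

lemma contr_gen_add_phi:
  assumes g: "cochain sA dA sM k g"
  shows "contr_gen mul h as (\<lambda>e. \<phi> e + \<psi> e) g bs e' = contr_gen mul h as \<phi> g bs e' + contr_gen mul h as \<psi> g bs e'"
  unfolding contr_gen_eq_len_sum[OF cochain_finite[OF g]] mul_add_left
  by (intro len_sum_add len_finite_contr cochain_finite[OF g])

lemma contr_gen_scale_phi: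
  assumes g: "cochain sA dA sM k g"
  shows "contr_gen mul h as (\<lambda>e. sM c (\<phi> e)) g bs e' = sM c (contr_gen mul h as \<phi> g bs e')"
  unfolding contr_gen_eq_len_sum[OF cochain_finite[OF g]] mul_scale_left
  by (intro len_sum_additive len_finite_contr cochain_finite[OF g] additive_scale)

lemma contr_gen_dA:
  assumes g: "cochain sA dA sM k g" and hk: "h \<le> k" and i: "i < h"
    and la: "length as = h" and lb: "length bs = k - h" and le': "length e' = k - h"
  shows "contr_gen mul h (as[i := dA (as ! i)]) \<phi> g bs e' = - contr_gen mul h as (lam_star h i \<phi>) g bs e'"
proof -
  let ?G = "g (as @ bs)"
  have fin: "finite {f. g X f \<noteq> 0}" for X by (rule cochain_finite[OF g])
  have pointwise: "mul (\<phi> e) (g (as[i := dA (as ! i)] @ bs) (e @ e'))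
     = - (if e ! i = 0 then 0 else mul (\<phi> e) (?G (e[i := e ! i - 1] @ e')))" if "length e = h" for e
    using cochain_dA[OF g, of "as @ bs" "e @ e'" i] that la lb le' hk i
    by (simp add: nth_append list_update_append mul_minus_right)
  have shifted: "len_finite h (\<lambda>e. if e ! i = 0 then 0 else mul (\<phi> e) (?G (e[i := e ! i - 1] @ e')))"
    by (rule len_finite_append_shift[OF fin[of "as @ bs"] _ i, where e'=e']) (auto split: if_splits)
  have "contr_gen mul h (as[i := dA (as ! i)]) \<phi> g bs e'
      = - len_sum h (\<lambda>e. if e ! i = 0 then 0 else mul (\<phi> e) (?G (e[i := e ! i - 1] @ e')))"
    unfolding contr_gen_eq_len_sum[OF fin] len_sum_neg[OF shifted, symmetric] by (rule len_sum_cong) (rule pointwise)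
  also have "\<dots> = - len_sum h (\<lambda>f. mul (\<phi> (f[i := f ! i + 1])) (?G (f @ e')))"
    using len_sum_shift[OF i, of "\<lambda>x y. mul (\<phi> x) (?G (y @ e'))"] by simp
  also have "\<dots> = - contr_gen mul h as (lam_star h i \<phi>) g bs e'"
    unfolding contr_gen_eq_len_sum[OF fin] by (simp cong: len_sum_cong add: lam_star_def)
  finally show ?thesis .
qed

lemma contr_gen_permute:
  assumes g: "cochain sA dA sM k g" and hk: "h \<le> k" and \<sigma>: "\<sigma> permutes {..<h}"
    and la: "length as = h" and lb: "length bs = k - h" and le': "length e' = k - h"
  shows "contr_gen mul h (permute_list \<sigma> as) (perm_star h \<sigma> \<phi>) g bs e'
     = sM (of_int (sign \<sigma>)) (contr_gen mul h as \<phi> g bs e')"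
proof -
  have fin: "finite {f. g X f \<noteq> 0}" for X by (rule cochain_finite[OF g])
  have \<sigma>k: "\<sigma> permutes {..<k}" using permutes_subset[OF \<sigma>] hk by auto
  have app: "permute_list \<sigma> (xs @ ys) = permute_list \<sigma> xs @ ys" if "length xs = h" for xs ys :: "'z list"
    using that \<sigma> permutes_in_image[OF \<sigma>] permutes_not_in[OF \<sigma>]
    by (intro nth_equalityI) (auto simp: permute_list_nth nth_append permute_list_def)
  have "contr_gen mul h (permute_list \<sigma> as) (perm_star h \<sigma> \<phi>) g bs e'
      = len_sum h (\<lambda>f. mul (perm_star h \<sigma> \<phi> (permute_list \<sigma> f)) (g (permute_list \<sigma> as @ bs) (permute_list \<sigma> f @ e')))"
    unfolding contr_gen_eq_len_sum[OF fin] by (rule len_sum_permute[OF \<sigma>, symmetric])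
  also have "\<dots> = len_sum h (\<lambda>f. sM (of_int (sign \<sigma>)) (mul (\<phi> f) (g (as @ bs) (f @ e'))))"
  proof (rule len_sum_cong)
    fix f :: "nat list" assume lf: "length f = h"
    have "permute_list (inv \<sigma>) (permute_list \<sigma> f) = f"
      using lf permute_list_compose[of "inv \<sigma>" f \<sigma>] permutes_inv[OF \<sigma>] \<sigma> by (simp add: permutes_inv_o)
    then have "perm_star h \<sigma> \<phi> (permute_list \<sigma> f) = \<phi> f"
      using lf by (simp add: perm_star_def permute_list_def[of "inv \<sigma>"])
    moreover have "g (permute_list \<sigma> as @ bs) (permute_list \<sigma> f @ e') = sM (of_int (sign \<sigma>)) (g (as @ bs) (f @ e'))"
      using cochain_permute[OF g _ _ \<sigma>k, of "as @ bs" "f @ e'"] la lb lf le' hk by (simp add: app)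
    ultimately show "mul (perm_star h \<sigma> \<phi> (permute_list \<sigma> f)) (g (permute_list \<sigma> as @ bs) (permute_list \<sigma> f @ e'))
        = sM (of_int (sign \<sigma>)) (mul (\<phi> f) (g (as @ bs) (f @ e')))"
      by (simp add: mul_scale_right)
  qed
  also have "\<dots> = sM (of_int (sign \<sigma>)) (contr_gen mul h as \<phi> g bs e')"
    unfolding contr_gen_eq_len_sum[OF fin] by (intro len_sum_additive len_finite_contr fin additive_scale)
  finally show ?thesis .
qed

lemma contr_gen_dA_tail:
  assumes g: "cochain sA dA sM k g" and hk: "h \<le> k" and i: "i < k - h"
    and la: "length as = h" and lb: "length bs = k - h" and le': "length e' = k - h"
  shows "contr_gen mul h as \<phi> g (bs[i := dA (bs ! i)]) e'
     = - (if e' ! i = 0 then 0 else contr_gen mul h as \<phi> g bs (e'[i := e' ! i - 1]))"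
proof -
  have fin: "finite {f. g X f \<noteq> 0}" for X by (rule cochain_finite[OF g])
  have pointwise: "g (as @ bs[i := dA (bs ! i)]) (e @ e')
      = - (if e' ! i = 0 then 0 else g (as @ bs) (e @ e'[i := e' ! i - 1]))" if "length e = h" for e
    using cochain_dA[OF g, of "as @ bs" "e @ e'" "h + i"] that la lb le' hk i
    by (simp add: nth_append list_update_append)
  show ?thesis
  proof (cases "e' ! i = 0")
    case True
    then show ?thesis unfolding contr_gen_eq_len_sum[OF fin]
      by (simp add: pointwise len_sum_def cong: len_sum_cong)
  next
    case False
    then show ?thesis unfolding contr_gen_eq_len_sum[OF fin]
      by (simp add: pointwise mul_minus_right len_sum_neg len_finite_contr fin cong: len_sum_cong)
  qed
qed

lemma contr_gen_permute_tail:
  assumes g: "cochain sA dA sM k g" and hk: "h \<le> k" and \<sigma>: "\<sigma> permutes {..<k - h}"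
    and la: "length as = h" and lb: "length bs = k - h" and le': "length e' = k - h"
  shows "contr_gen mul h as \<phi> g (permute_list \<sigma> bs) (permute_list \<sigma> e')
     = sM (of_int (sign \<sigma>)) (contr_gen mul h as \<phi> g bs e')"
proof -
  have fin: "finite {f. g X f \<noteq> 0}" for X by (rule cochain_finite[OF g])
  have pointwise: "g (as @ permute_list \<sigma> bs) (e @ permute_list \<sigma> e')
      = sM (of_int (sign \<sigma>)) (g (as @ bs) (e @ e'))" if "length e = h" for e
  proof -
    let ?\<tau> = "map_permutation {..<k - h} ((+) h) \<sigma>"
    have "\<sigma> permutes {..<length bs}" "\<sigma> permutes {..<length e'}" using \<sigma> lb le' by simp_all
    note shift_bs = permute_list_append_shift[OF this(1), of as] and
      shift_e' = permute_list_append_shift[OF this(2), of e]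
    have "?\<tau> permutes {..<k}" "sign ?\<tau> = sign \<sigma>"
      "permute_list ?\<tau> (as @ bs) = as @ permute_list \<sigma> bs"
      "permute_list ?\<tau> (e @ e') = e @ permute_list \<sigma> e'"
      using shift_bs shift_e' la lb le' hk that by simp_all
    then show ?thesis
      using cochain_permute[OF g, of "as @ bs" "e @ e'" ?\<tau>] that la lb le' hk by simp
  qed
  show ?thesis
    unfolding contr_gen_eq_len_sum[OF fin]
    by (simp add: pointwise mul_scale_right len_sum_additive[OF len_finite_contr[OF fin] additive_scale]
        cong: len_sum_cong)
qed

lemma dM_contr_gen:
  assumes g: "cochain sA dA sM k g"
  shows "dM (contr_gen mul h as \<phi> g bs e') = contr_gen mul h as (\<lambda>e. dM (\<phi> e)) g bs e'
      + len_sum h (\<lambda>e. mul (\<phi> e) (dM (g (as @ bs) (e @ e'))))"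
proof -
  have fin: "finite {f. g X f \<noteq> 0}" for X by (rule cochain_finite[OF g])
  have "dM (len_sum h (\<lambda>e. mul (\<phi> e) (g (as @ bs) (e @ e'))))
      = len_sum h (\<lambda>e. mul (dM (\<phi> e)) (g (as @ bs) (e @ e')) + mul (\<phi> e) (dM (g (as @ bs) (e @ e'))))"
    by (simp add: len_sum_additive[OF len_finite_contr[OF fin], symmetric] additive_def dM.add dM_mul)
  also have "\<dots> = len_sum h (\<lambda>e. mul (dM (\<phi> e)) (g (as @ bs) (e @ e')))
      + len_sum h (\<lambda>e. mul (\<phi> e) (dM (g (as @ bs) (e @ e'))))"
  proof (rule len_sum_add[OF len_finite_contr[OF fin]])
    show "len_finite h (\<lambda>e. mul (\<phi> e) (dM (g (as @ bs) (e @ e'))))"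
      by (rule len_finite_append[OF fin[of "as @ bs"], where e'=e']) auto
  qed
  finally show ?thesis unfolding contr_gen_eq_len_sum[OF fin] .
qed

lemma contr_gen_dcoch:
  assumes g: "cochain sA dA sM k g" and hk: "h \<le> k"
    and la: "length as = h" and lb: "length bs = k - h" and le': "length e' = k - h"
  shows "contr_gen mul h as \<phi> (dcoch dM k g) bs e'
      = len_sum h (\<lambda>e. mul (\<phi> e) (dM (g (as @ bs) (e @ e'))))
      + (\<Sum>i<h. contr_gen mul h as (lam_star h i \<phi>) g bs e')
      + (\<Sum>i<k - h. if e' ! i = 0 then 0 else contr_gen mul h as \<phi> g bs (e'[i := e' ! i - 1]))"
proof -
  let ?G = "g (as @ bs)"
  have fin: "finite {f. g X f \<noteq> 0}" for X by (rule cochain_finite[OF g])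
  define Ld where "Ld = (\<lambda>e. mul (\<phi> e) (dM (?G (e @ e'))))"
  define Lh where "Lh i e = (if e ! i = 0 then 0 else mul (\<phi> e) (?G (e[i := e ! i - 1] @ e')))" for i e
  define Lt where "Lt i e = (if e' ! i = 0 then 0 else mul (\<phi> e) (?G (e @ e'[i := e' ! i - 1])))" for i e
  have fin_Ld: "len_finite h Ld"
    unfolding Ld_def by (rule len_finite_append[OF fin[of "as @ bs"], where e'=e']) auto
  have fin_Lh: "len_finite h (Lh i)" if "i < h" for i
    unfolding Lh_def by (rule len_finite_append_shift[OF fin[of "as @ bs"] _ that, where e'=e'])
      (auto split: if_splits)
  have fin_Lt: "len_finite h (Lt i)" for i
    using len_finite_contr[OF fin[of "as @ bs"], where \<phi>=\<phi> and e'="e'[i := e' ! i - 1]"] unfolding Lt_def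
    by (rule len_finite_subset) (auto split: if_splits)
  have "contr_gen mul h as \<phi> (dcoch dM k g) bs e'
      = len_sum h (\<lambda>e. Ld e + (\<Sum>i<h. Lh i e) + (\<Sum>i<k - h. Lt i e))"
    unfolding contr_gen_eq_len_sum[OF dcoch_finite[OF g]]
    using la lb le' hk
    by (intro len_sum_cong) (simp add: dcoch_append Ld_def Lh_def Lt_def mul_add_right mul_sum_right
        if_distrib[of "mul (\<phi> _)"] cong: if_cong)
  also have "\<dots> = len_sum h Ld + (\<Sum>i<h. len_sum h (Lh i)) + (\<Sum>i<k - h. len_sum h (Lt i))"
  proof -
    have sum_h: "len_finite h (\<lambda>e. \<Sum>i<h. Lh i e)" and sum_t: "len_finite h (\<lambda>e. \<Sum>i<k - h. Lt i e)"
      using fin_Lh fin_Lt by (auto intro: len_finite_sum)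
    have "len_sum h (\<lambda>e. \<Sum>i<h. Lh i e) = (\<Sum>i<h. len_sum h (Lh i))"
      "len_sum h (\<lambda>e. \<Sum>i<k - h. Lt i e) = (\<Sum>i<k - h. len_sum h (Lt i))"
      using fin_Lh fin_Lt by (auto intro: len_sum_sum)
    then show ?thesis
      by (simp add: len_sum_add[OF len_finite_add[OF fin_Ld sum_h] sum_t] len_sum_add[OF fin_Ld sum_h])
  qed
  moreover have "len_sum h (Lh i) = contr_gen mul h as (lam_star h i \<phi>) g bs e'" if "i < h" for i
    using len_sum_shift[OF that, of "\<lambda>x y. mul (\<phi> x) (?G (y @ e'))"] that
    by (simp add: Lh_def contr_gen_eq_len_sum[OF fin] lam_star_def cong: len_sum_cong)
  moreover have "len_sum h (Lt i) = (if e' ! i = 0 then 0 else contr_gen mul h as \<phi> g bs (e'[i := e' ! i - 1]))" for i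
    by (simp add: Lt_def contr_gen_eq_len_sum[OF fin] len_sum_def)
  ultimately show ?thesis by (simp add: Ld_def)
qed

lemma contr_gen_dgen_phi:
  assumes g: "cochain sA dA sM k g"
  shows "contr_gen mul h as (dgen_phi dM h \<phi>) g bs e'
      = contr_gen mul h as (\<lambda>e. dM (\<phi> e)) g bs e' - (\<Sum>i<h. contr_gen mul h as (lam_star h i \<phi>) g bs e')"
proof -
  have fin: "finite {f. g X f \<noteq> 0}" for X by (rule cochain_finite[OF g])
  have "contr_gen mul h as (dgen_phi dM h \<phi>) g bs e'
      = len_sum h (\<lambda>e. mul (dM (\<phi> e)) (g (as @ bs) (e @ e'))
          - (\<Sum>i<h. mul (lam_star h i \<phi> e) (g (as @ bs) (e @ e'))))"
    unfolding contr_gen_eq_len_sum[OF fin]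
    by (rule len_sum_cong) (simp add: dgen_phi_def mul_diff_left mul_sum_left)
  also have "\<dots> = contr_gen mul h as (\<lambda>e. dM (\<phi> e)) g bs e' - (\<Sum>i<h. contr_gen mul h as (lam_star h i \<phi>) g bs e')"
    unfolding contr_gen_eq_len_sum[OF fin]
    by (simp add: len_sum_diff[OF len_finite_contr[OF fin] len_finite_sum] len_sum_sum len_finite_contr fin)
  finally show ?thesis .
qed

lemma contr_gen_commutator:
  assumes g: "cochain sA dA sM k g" and hk: "h \<le> k"
    and la: "length as = h" and lb: "length bs = k - h" and le': "length e' = k - h"
  shows "dM (contr_gen mul h as \<phi> g bs e')
      + (\<Sum>i<k - h. if e' ! i = 0 then 0 else contr_gen mul h as \<phi> g bs (e'[i := e' ! i - 1]))
      - contr_gen mul h as \<phi> (dcoch dM k g) bs e'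
    = contr_gen mul h as (dgen_phi dM h \<phi>) g bs e'"
  unfolding dM_contr_gen[OF g] contr_gen_dcoch[OF assms] contr_gen_dgen_phi[OF g]
  by (simp add: algebra_simps)

subsection \<open>Contraction with a chain\<close>

lemma iota_superset:
  assumes "finite U" "{p. \<xi> p \<noteq> 0} \<subseteq> U"
  shows "iota sM mul h k \<xi> g bs e' = (if h \<le> k \<and> length bs = k - h \<and> length e' = k - h then
      \<Sum>p\<in>U. sM (\<xi> p) (contr_gen mul h (fst p) (snd p) g bs e') else 0)"
  unfolding iota_def using assms by (auto intro: sum.mono_neutral_left)

lemma iota_add:
  assumes "finite_support \<xi>" "finite_support \<eta>"
  shows "iota sM mul h k (\<lambda>p. \<xi> p + \<eta> p) g bs e' = iota sM mul h k \<xi> g bs e' + iota sM mul h k \<eta> g bs e'"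
proof -
  let ?U = "{p. \<xi> p \<noteq> 0} \<union> {p. \<eta> p \<noteq> 0}"
  have "finite ?U" using assms by (simp add: finite_support_def)
  moreover have "{p. \<xi> p + \<eta> p \<noteq> 0} \<subseteq> ?U" "{p. \<xi> p \<noteq> 0} \<subseteq> ?U" "{p. \<eta> p \<noteq> 0} \<subseteq> ?U"
    by auto
  ultimately show ?thesis
    by (simp only: iota_superset) (simp add: scale_left_distrib sum.distrib)
qed

lemma iota_scale:
  assumes "finite_support \<xi>"
  shows "iota sM mul h k (\<lambda>p. c * \<xi> p) g bs e' = sM c (iota sM mul h k \<xi> g bs e')"
  using assms
  by (simp add: finite_support_def iota_superset[of "{p. \<xi> p \<noteq> 0}"] scale_sum_right subset_iff)

lemma iota_diff:
  assumes "finite_support \<xi>" "finite_support \<eta>"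
  shows "iota sM mul h k (\<lambda>p. \<xi> p - \<eta> p) g bs e' = iota sM mul h k \<xi> g bs e' - iota sM mul h k \<eta> g bs e'"
  using iota_add[OF assms(1) finite_support_mult[OF assms(2), where c="- 1"]]
    iota_scale[OF assms(2), where c="- 1"]
  by simp

lemma iota_delta:
  "iota sM mul h k (delta x) g bs e' = (if h \<le> k \<and> length bs = k - h \<and> length e' = k - h then
      contr_gen mul h (fst x) (snd x) g bs e' else 0)"
  by (simp add: iota_superset[of "{x}"] delta_def)

lemma iota_eq_sum_delta:
  assumes "finite_support \<xi>"
  shows "iota sM mul h k \<xi> g bs e' = (\<Sum>p\<in>{p. \<xi> p \<noteq> 0}. sM (\<xi> p) (iota sM mul h k (delta p) g bs e'))"
  by (simp only: iota_delta) (auto simp: iota_def)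

lemma finite_support_chain_rep: "chain_rep h \<xi> \<Longrightarrow> finite_support \<xi>"
  unfolding chain_rep_def finite_support_def by simp

lemma chain_rep_length: "chain_rep h \<xi> \<Longrightarrow> \<xi> p \<noteq> 0 \<Longrightarrow> length (fst p) = h"
  unfolding chain_rep_def valid_gen_def by (cases p) auto

lemma cochain_add_closed:
  assumes "cochain sA dA sM n G" "cochain sA dA sM n H"
  shows "cochain sA dA sM n (\<lambda>as e. G as e + H as e)"
proof -
  have "finite {e. G as e + H as e \<noteq> 0}" for as
    using cochain_finite[OF assms(1), of as] cochain_finite[OF assms(2), of as]
    by (rule finite_support_add[of "G as" "H as", unfolded finite_support_def])
  then show ?thesis
    using assms unfolding cochain_def by (simp add: scale_right_distrib algebra_simps)
qed

lemma cochain_scale_closed: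
  assumes "cochain sA dA sM n G"
  shows "cochain sA dA sM n (\<lambda>as e. sM c (G as e))"
proof -
  have "finite {e. sM c (G as e) \<noteq> 0}" for as
    by (rule finite_subset[OF _ cochain_finite[OF assms, of as]]) auto
  then show ?thesis
    using assms unfolding cochain_def by (simp add: scale_left_commute scale_right_distrib)
qed

lemma cochain_lincomb:
  assumes "finite S" "\<And>p. p \<in> S \<Longrightarrow> cochain sA dA sM n (G p)"
  shows "cochain sA dA sM n (\<lambda>as e. \<Sum>p\<in>S. sM (c p) (G p as e))"
  using assms
proof (induction S rule: finite_induct)
  case empty
  then show ?case by (simp add: cochain_def)
next
  case (insert p S)
  then show ?case by (simp add: cochain_add_closed cochain_scale_closed)
qed

lemma cochain_iota_delta:
  fixes g :: "'a::ab_group_add list \<Rightarrow> nat list \<Rightarrow> 'm"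
  assumes g: "cochain sA dA sM k g" and hk: "h \<le> k" and la: "length as = h"
  shows "cochain sA dA sM (k - h) (iota sM mul h k (delta (as, \<phi>)) g)"
proof -
  let ?C = "iota sM mul h k (delta (as, \<phi>)) g"
  have C: "?C bs e' = contr_gen mul h as \<phi> g bs e'" if "length bs = k - h" "length e' = k - h" for bs e'
    using that hk by (simp add: iota_delta)
  have outside: "?C bs e' = 0" if "length bs \<noteq> k - h \<or> length e' \<noteq> k - h" for bs e'
    using that by (auto simp: iota_delta)
  have finite: "finite {e'. ?C bs e' \<noteq> 0}" for bs
  proof (rule finite_subset)
    show "{e'. ?C bs e' \<noteq> 0} \<subseteq> drop h ` {f. g (as @ bs) f \<noteq> 0}"
    proof
      fix e' assume "e' \<in> {e'. ?C bs e' \<noteq> 0}"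
      then have "contr_gen mul h as \<phi> g bs e' \<noteq> 0" by (auto simp: iota_delta split: if_splits)
      then obtain e where "length e = h" "g (as @ bs) (e @ e') \<noteq> 0"
        unfolding contr_gen_def by (auto elim: sum.not_neutral_contains_not_neutral)
      then show "e' \<in> drop h ` {f. g (as @ bs) f \<noteq> 0}" by (intro image_eqI[of _ _ "e @ e'"]) auto
    qed
  qed (simp add: cochain_finite[OF g])
  have index: "as @ bs[i := x] = (as @ bs)[h + i := x]" "length (as @ bs) = k" "h + i < k"
    if "length bs = k - h" "i < k - h" for bs i and x :: 'a
    using that la hk by (simp_all add: list_update_append)
  show ?thesis
    unfolding cochain_def
  proof (intro conjI allI impI)
    fix bs :: "'a list" and e :: "nat list" and i :: nat and x y :: 'a
    assume "length bs = k - h" "i < k - h"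
    then show "?C (bs[i := x + y]) e = ?C (bs[i := x]) e + ?C (bs[i := y]) e"
      using C outside contr_gen_add[OF g] cochain_add[OF g] index by (cases "length e = k - h") auto
  next
    fix bs :: "'a list" and e :: "nat list" and i :: nat and c :: 'f and x :: 'a
    assume "length bs = k - h" "i < k - h"
    then show "?C (bs[i := sA c x]) e = sM c (?C (bs[i := x]) e)"
      using C outside contr_gen_scale[OF g] cochain_scale[OF g] index by (cases "length e = k - h") auto
  next
    fix bs :: "'a list" and e :: "nat list" and i :: nat
    assume "length bs = k - h" "length e = k - h" "i < k - h"
    then show "?C (bs[i := dA (bs ! i)]) e = - (if e ! i = 0 then 0 else ?C bs (e[i := e ! i - 1]))"
      using C contr_gen_dA_tail[OF g hk _ la] by simp
  next
    fix bs :: "'a list" and e :: "nat list" and \<sigma> :: "nat \<Rightarrow> nat"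
    assume "length bs = k - h" "length e = k - h" "\<sigma> permutes {..<k - h}"
    then show "?C (map (\<lambda>j. bs ! \<sigma> j) [0..<k - h]) (map (\<lambda>j. e ! \<sigma> j) [0..<k - h])
        = sM (of_int (sign \<sigma>)) (?C bs e)"
      using C contr_gen_permute_tail[OF g hk _ la] by (simp add: permute_list_def)
  qed (use outside finite in auto)
qed

lemma cochain_iota:
  assumes \<xi>: "chain_rep h \<xi>" and g: "cochain sA dA sM k g" and hk: "h \<le> k"
  shows "cochain sA dA sM (k - h) (iota sM mul h k \<xi> g)"
proof -
  have "cochain sA dA sM (k - h) (iota sM mul h k (delta p) g)" if "p \<in> {p. \<xi> p \<noteq> 0}" for p
    using cochain_iota_delta[OF g hk chain_rep_length[OF \<xi>], of p "snd p"] that by simp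
  then show ?thesis
    unfolding iota_eq_sum_delta[OF finite_support_chain_rep[OF \<xi>], abs_def]
    by (rule cochain_lincomb[OF finite_support_chain_rep[OF \<xi>, unfolded finite_support_def]])
qed

lemma dcoch_lincomb:
  "dcoch dM n (\<lambda>as e. \<Sum>p\<in>S. sM (c p) (G p as e)) as e = (\<Sum>p\<in>S. sM (c p) (dcoch dM n (G p) as e))"
proof (cases "length as = n \<and> length e = n")
  case True
  have "(\<Sum>i<n. if e ! i = 0 then 0 else \<Sum>p\<in>S. sM (c p) (G p as (e[i := e ! i - 1])))
      = (\<Sum>p\<in>S. sM (c p) (\<Sum>i<n. if e ! i = 0 then 0 else G p as (e[i := e ! i - 1])))"
    unfolding scale_sum_right by (subst sum.swap) (rule sum.cong; simp)
  with True show ?thesis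
    by (simp add: dcoch_def dM.sum dM.scale scale_right_distrib sum.distrib)
qed (auto simp: dcoch_def)

lemma iota_delta_commutator:
  assumes g: "cochain sA dA sM k g" and la: "length as = h"
  shows "dcoch dM (k - h) (iota sM mul h k (delta (as, \<phi>)) g) bs e'
      - iota sM mul h k (delta (as, \<phi>)) (dcoch dM k g) bs e'
    = iota sM mul h k (delta (as, dgen_phi dM h \<phi>)) g bs e'"
proof (cases "h \<le> k \<and> length bs = k - h \<and> length e' = k - h")
  case True
  then have "dcoch dM (k - h) (iota sM mul h k (delta (as, \<phi>)) g) bs e' = dM (contr_gen mul h as \<phi> g bs e')
      + (\<Sum>i<k - h. if e' ! i = 0 then 0 else contr_gen mul h as \<phi> g bs (e'[i := e' ! i - 1]))"
    by (auto simp: dcoch_def[of dM "k - h"] iota_delta intro!: sum.cong)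
  then show ?thesis
    using True contr_gen_commutator[OF g _ la, of bs e' \<phi>] by (simp add: iota_delta)
next
  case False
  then have "iota sM mul h k (delta (as, \<phi>)) g bs' e'' = 0" if "length bs' = length bs" "length e'' = length e'"
    for bs' e'' using that by (auto simp: iota_delta)
  with False show ?thesis by (auto simp: dcoch_def[of dM "k - h"] iota_delta)
qed

lemma sum_scale_pushforward:
  assumes "finite S"
  shows "(\<Sum>p\<in>S. sM (c p) (K (\<Phi> p)))
    = (\<Sum>q\<in>{q. (\<Sum>p\<in>{p\<in>S. \<Phi> p = q}. c p) \<noteq> 0}. sM (\<Sum>p\<in>{p\<in>S. \<Phi> p = q}. c p) (K q))"
proof -
  have "(\<Sum>p\<in>S. sM (c p) (K (\<Phi> p))) = (\<Sum>q\<in>\<Phi> ` S. \<Sum>p\<in>{p\<in>S. \<Phi> p = q}. sM (c p) (K (\<Phi> p)))"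
    by (rule sum.image_gen[OF assms])
  also have "\<dots> = (\<Sum>q\<in>\<Phi> ` S. sM (\<Sum>p\<in>{p\<in>S. \<Phi> p = q}. c p) (K q))"
    by (simp add: scale_sum_left)
  also have "\<dots> = (\<Sum>q\<in>{q. (\<Sum>p\<in>{p\<in>S. \<Phi> p = q}. c p) \<noteq> 0}. sM (\<Sum>p\<in>{p\<in>S. \<Phi> p = q}. c p) (K q))"
  proof (rule sum.mono_neutral_right)
    show "{q. (\<Sum>p\<in>{p\<in>S. \<Phi> p = q}. c p) \<noteq> 0} \<subseteq> \<Phi> ` S"
      by (auto elim: sum.not_neutral_contains_not_neutral)
  qed (use assms in auto)
  finally show ?thesis .
qed

lemma iota_dchain:
  assumes fin: "finite_support \<xi>"
  shows "iota sM mul h k (dchain dM h \<xi>) g bs e'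
    = (\<Sum>p\<in>{p. \<xi> p \<noteq> 0}. sM (\<xi> p) (iota sM mul h k (delta (fst p, dgen_phi dM h (snd p))) g bs e'))"
proof -
  let ?\<Phi> = "\<lambda>p. (fst p, dgen_phi dM h (snd p))"
  have "{q. dchain dM h \<xi> q \<noteq> 0} \<subseteq> ?\<Phi> ` {p. \<xi> p \<noteq> 0}"
    by (auto simp: dchain_eq_sum elim!: sum.not_neutral_contains_not_neutral)
  then have "finite_support (dchain dM h \<xi>)"
    unfolding finite_support_def by (rule finite_subset) (use fin in \<open>simp add: finite_support_def\<close>)
  then have "iota sM mul h k (dchain dM h \<xi>) g bs e'
      = (\<Sum>q\<in>{q. dchain dM h \<xi> q \<noteq> 0}. sM (dchain dM h \<xi> q) (iota sM mul h k (delta q) g bs e'))"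
    by (rule iota_eq_sum_delta)
  also have "\<dots> = (\<Sum>p\<in>{p. \<xi> p \<noteq> 0}. sM (\<xi> p) (iota sM mul h k (delta (?\<Phi> p)) g bs e'))"
    unfolding sum_scale_pushforward[OF fin[unfolded finite_support_def], of \<xi> "\<lambda>q. iota sM mul h k (delta q) g bs e'" ?\<Phi>] dchain_eq_sum
    by simp
  finally show ?thesis .
qed

lemma iota_commutator:
  assumes \<xi>: "chain_rep h \<xi>" and g: "cochain sA dA sM k g"
  shows "dcoch dM (k - h) (iota sM mul h k \<xi> g) bs e' - iota sM mul h k \<xi> (dcoch dM k g) bs e'
    = iota sM mul h k (dchain dM h \<xi>) g bs e'"
proof -
  let ?S = "{p. \<xi> p \<noteq> 0}"
  have fin: "finite_support \<xi>" using \<xi> by (rule finite_support_chain_rep)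
  have la: "length (fst p) = h" if "p \<in> ?S" for p
    using chain_rep_length[OF \<xi>] that by simp
  have "dcoch dM (k - h) (iota sM mul h k \<xi> g) bs e' - iota sM mul h k \<xi> (dcoch dM k g) bs e'
      = (\<Sum>p\<in>?S. sM (\<xi> p) (dcoch dM (k - h) (iota sM mul h k (delta p) g) bs e'
          - iota sM mul h k (delta p) (dcoch dM k g) bs e'))"
    unfolding iota_eq_sum_delta[OF fin, abs_def] dcoch_lincomb
    by (simp add: scale_right_diff_distrib sum_subtractf)
  also have "\<dots> = (\<Sum>p\<in>?S. sM (\<xi> p) (iota sM mul h k (delta (fst p, dgen_phi dM h (snd p))) g bs e'))"
  proof (rule sum.cong)
    fix p assume "p \<in> ?S"
    then show "sM (\<xi> p) (dcoch dM (k - h) (iota sM mul h k (delta p) g) bs e'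
          - iota sM mul h k (delta p) (dcoch dM k g) bs e')
        = sM (\<xi> p) (iota sM mul h k (delta (fst p, dgen_phi dM h (snd p))) g bs e')"
      using iota_delta_commutator[OF g la, of p "snd p" bs e'] by simp
  qed simp
  finally show ?thesis unfolding iota_dchain[OF fin] .
qed

lemma iota_chain_null:
  assumes g: "cochain sA dA sM k g"
  shows "\<eta> \<in> chain_null sA dA sM h \<Longrightarrow> iota sM mul h k \<eta> g bs e' = 0"
proof (induction arbitrary: bs e' rule: chain_null.induct)
  case zero
  then show ?case by (simp add: iota_def)
next
  case (add \<xi> \<eta>)
  then show ?case by (simp add: iota_add finite_support_chain_null)
next
  case (scale \<xi> c)
  then show ?case by (simp add: iota_scale finite_support_chain_null)
next
  case (lin_add_a as \<phi> i x y)
  have "g (as[i := x + y] @ bs) f = g (as[i := x] @ bs) f + g (as[i := y] @ bs) f"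
    if "h \<le> k" "length bs = k - h" for f
    using cochain_add[OF g, of "as @ bs" i] lin_add_a that by (simp add: valid_gen_def list_update_append)
  then show ?case by (simp add: iota_diff iota_delta contr_gen_add[OF g])
next
  case (lin_scale_a as \<phi> i c x)
  have "g (as[i := sA c x] @ bs) f = sM c (g (as[i := x] @ bs) f)"
    if "h \<le> k" "length bs = k - h" for f
    using cochain_scale[OF g, of "as @ bs" i] lin_scale_a that by (simp add: valid_gen_def list_update_append)
  then show ?case by (simp add: iota_diff iota_scale iota_delta contr_gen_scale[OF g])
next
  case (lin_add_phi as \<phi> \<psi>)
  then show ?case by (simp add: iota_diff iota_delta contr_gen_add_phi[OF g])
next
  case (lin_scale_phi as \<phi> c)
  then show ?case by (simp add: iota_diff iota_scale iota_delta contr_gen_scale_phi[OF g])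
next
  case (C1 as \<phi> i)
  then show ?case by (simp add: iota_add iota_delta contr_gen_dA[OF g] valid_gen_def)
next
  case (C2 as \<phi> \<sigma>)
  then have "map (\<lambda>j. as ! \<sigma> j) [0..<h] = permute_list \<sigma> as" by (simp add: valid_gen_def permute_list_def)
  with C2 show ?case by (simp add: iota_diff iota_scale iota_delta contr_gen_permute[OF g] valid_gen_def)
qed

lemma iota_commutes:
  assumes "chain_rep h \<xi>" "dchain dM h \<xi> \<in> chain_null sA dA sM h" "cochain sA dA sM k g"
  shows "dcoch dM (k - h) (iota sM mul h k \<xi> g) = iota sM mul h k \<xi> (dcoch dM k g)"
  using iota_commutator[OF assms(1,3)] iota_chain_null[OF assms(3,2)] by (intro ext) simp

lemma iota_maps_exact:
  assumes "chain_rep h \<xi>" "dchain dM h \<xi> \<in> chain_null sA dA sM h" "h \<le> k" "cochain sA dA sM k \<beta>"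
  shows "\<exists>\<beta>'. cochain sA dA sM (k - h) \<beta>' \<and> iota sM mul h k \<xi> (dcoch dM k \<beta>) = dcoch dM (k - h) \<beta>'"
  using cochain_iota[OF assms(1,4,3)] iota_commutes[OF assms(1,2,4)] by auto

end

lemma comm_derivation_product_if_module:
  assumes "conformal_module sA dA br sM dM act" and "derivation_product sM dM act mul"
  shows "comm_derivation_product sM dM mul"
  using assms unfolding conformal_module_def derivation_product_def comm_derivation_product_def
    comm_derivation_product_axioms_def by (auto simp: Vector_Spaces.linear_def)

theorem proposition3p5:
  fixes sA :: "'f::field_char_0 \<Rightarrow> 'a::ab_group_add \<Rightarrow> 'a"
    and dA :: "'a \<Rightarrow> 'a" and br :: "'a \<Rightarrow> 'a \<Rightarrow> nat \<Rightarrow> 'a"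
    and sM :: "'f \<Rightarrow> 'm::ab_group_add \<Rightarrow> 'm" and dM :: "'m \<Rightarrow> 'm"
    and act :: "'a \<Rightarrow> 'm \<Rightarrow> nat \<Rightarrow> 'm" and mul :: "'m \<Rightarrow> 'm \<Rightarrow> 'm"
    and h :: nat
  assumes "conformal_module sA dA br sM dM act"
    and "derivation_product sM dM act mul"
  shows
    "(\<forall>\<xi> k g. chain_rep h \<xi> \<longrightarrow> cochain sA dA sM k g \<longrightarrow>
        (\<lambda>bs e. dcoch dM (k - h) (iota sM mul h k \<xi> g) bs e
                 - iota sM mul h k \<xi> (dcoch dM k g) bs e)
        = iota sM mul h k (dchain dM h \<xi>) g)
     \<and>
     (\<forall>\<xi>. chain_rep h \<xi> \<longrightarrow> dchain dM h \<xi> \<in> chain_null sA dA sM h \<longrightarrow>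
        (\<forall>k g. cochain sA dA sM k g \<longrightarrow>
           dcoch dM (k - h) (iota sM mul h k \<xi> g) = iota sM mul h k \<xi> (dcoch dM k g))
        \<and> (\<forall>k g. h \<le> k \<longrightarrow> cochain sA dA sM k g \<longrightarrow>
             cochain sA dA sM (k - h) (iota sM mul h k \<xi> g))
        \<and> (\<forall>k \<beta>. h \<le> k \<longrightarrow> cochain sA dA sM k \<beta> \<longrightarrow>
             (\<exists>\<beta>'. cochain sA dA sM (k - h) \<beta>' \<and>
                iota sM mul h k \<xi> (dcoch dM k \<beta>) = dcoch dM (k - h) \<beta>')))"
proof -
  interpret comm_derivation_product sM dM mul
    by (rule comm_derivation_product_if_module[OF assms])
  show ?thesis
    by (intro conjI allI impI iota_commutes cochain_iota iota_maps_exact ext iota_commutator; assumption)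
qed

end
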